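(* Let $M=\neg A_1\lor\dots\lor\neg A_n\lor D$ be a flat clause ($D$ positive), and for $i=1,\dots,n$ let $C_i=B_i\lor D_i$ be loosely guarded clauses with $B_i$ a positive literal, such that $M,C_1,\dots,C_n$ are pairwise variable-disjoint and, for each $i$, either $C_i$ is ground or $B_i$ contains a compound term. Let $\sigma'$ be a simultaneous most general unifier with $B_i\sigma'=A_i\sigma'$ for all $1\le i\le n$, and call a variable $x$ of $\neg A_1\lor\dots\lor\neg A_n$ a top variable if $\mathrm{Dep}(x\sigma')\ge\mathrm{Dep}(y\sigma')$ for every variable $y$ of $\neg A_1\lor\dots\lor\neg A_n$. Then: (1) For every $i$ such that $A_i$ contains a top variable, every top variable occurring in $A_i$ at argument position $k$ is matched by a constant or a compound term at position $k$ of $B_i$, and every non-top variable occurring in $A_i$ at position $k$ is matched by a constant or a variable at position $k$ of $B_i$. (2) If some top variable occurring in some $A_i$ is matched by a constant in $B_i$, then every variable of $\neg A_1\lor\dots\lor\neg A_n$ is a top variable and $\sigma'$ maps each such variable to a constant.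
   Context: A compound term is a term that is neither a variable nor a constant; $\mathrm{Var}(E)$ is the set of variables of $E$. Term depth: $\mathrm{Dep}(t)=0$ if $t$ is a variable or constant, and $\mathrm{Dep}(f(u_1,\dots,u_n))=1+\max_i\mathrm{Dep}(u_i)$. A literal is flat if every argument is a variable or constant; simple if every argument is a variable, a constant, or $f(u_1,\dots,u_n)$ with each $u_i$ a variable or constant; a clause is flat/simple if all its literals are. A clause $C$ is covering if every compound term $t$ in $C$ satisfies $\mathrm{Var}(t)=\mathrm{Var}(C)$. A loosely guarded clause is an equality-free, simple, covering clause $C$ that is either ground or contains a set $\mathcal G$ of negative flat literals with $\mathrm{Var}(\mathcal G)=\mathrm{Var}(C)$ such that every pair of variables of $C$ co-occurs in some literal of $\mathcal G$ (guarded clauses are special cases). For literals $A(s_1,\dots,s_k)$ and $B(r_1,\dots,r_k)$ being unified, the term $s_j$ is said to be matched by $r_j$. *)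

theory Defs
  imports Main
begin

text \<open>Terms over function symbols 'f (constants are 0-ary function symbols) and variables 'v.\<close>
datatype ('f, 'v) trm = Var 'v | Fun 'f "('f, 'v) trm list"

datatype ('p, 'f, 'v) atm = Pred 'p "('f, 'v) trm list" | Eq "('f, 'v) trm" "('f, 'v) trm"

datatype ('p, 'f, 'v) lit = Lit (positive: bool) (atom: "('p, 'f, 'v) atm")

type_synonym ('p, 'f, 'v) clause = "('p, 'f, 'v) lit list"

fun tvars :: "('f, 'v) trm \<Rightarrow> 'v set" where
  "tvars (Var x) = {x}"
| "tvars (Fun f ts) = (\<Union>t \<in> set ts. tvars t)"

fun args :: "('p, 'f, 'v) atm \<Rightarrow> ('f, 'v) trm list" where
  "args (Pred p ts) = ts"
| "args (Eq s t) = [s, t]"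

definition avars :: "('p, 'f, 'v) atm \<Rightarrow> 'v set" where
  "avars A = (\<Union>t \<in> set (args A). tvars t)"

definition lvars :: "('p, 'f, 'v) lit \<Rightarrow> 'v set" where
  "lvars L = avars (atom L)"

definition cvars :: "('p, 'f, 'v) clause \<Rightarrow> 'v set" where
  "cvars C = (\<Union>L \<in> set C. lvars L)"

definition is_var :: "('f, 'v) trm \<Rightarrow> bool" where
  "is_var t \<longleftrightarrow> (\<exists>x. t = Var x)"

definition is_const :: "('f, 'v) trm \<Rightarrow> bool" where
  "is_const t \<longleftrightarrow> (\<exists>c. t = Fun c [])"

definition is_compound :: "('f, 'v) trm \<Rightarrow> bool" where
  "is_compound t \<longleftrightarrow> \<not> is_var t \<and> \<not> is_const t"

fun subterms :: "('f, 'v) trm \<Rightarrow> ('f, 'v) trm set" where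
  "subterms (Var x) = {Var x}"
| "subterms (Fun f ts) = insert (Fun f ts) (\<Union>t \<in> set ts. subterms t)"

definition atm_terms :: "('p, 'f, 'v) atm \<Rightarrow> ('f, 'v) trm set" where
  "atm_terms A = (\<Union>t \<in> set (args A). subterms t)"

definition cl_terms :: "('p, 'f, 'v) clause \<Rightarrow> ('f, 'v) trm set" where
  "cl_terms C = (\<Union>L \<in> set C. atm_terms (atom L))"

fun dep :: "('f, 'v) trm \<Rightarrow> nat" where
  "dep (Var x) = 0"
| "dep (Fun f ts) = (if ts = [] then 0 else 1 + Max (set (map dep ts)))"

definition flat_lit :: "('p, 'f, 'v) lit \<Rightarrow> bool" where
  "flat_lit L \<longleftrightarrow> (\<forall>t \<in> set (args (atom L)). is_var t \<or> is_const t)"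

definition simple_lit :: "('p, 'f, 'v) lit \<Rightarrow> bool" where
  "simple_lit L \<longleftrightarrow> (\<forall>t \<in> set (args (atom L)).
      is_var t \<or> is_const t \<or> (\<exists>f us. t = Fun f us \<and> (\<forall>u \<in> set us. is_var u \<or> is_const u)))"

definition flat_clause :: "('p, 'f, 'v) clause \<Rightarrow> bool" where
  "flat_clause C \<longleftrightarrow> (\<forall>L \<in> set C. flat_lit L)"

definition simple_clause :: "('p, 'f, 'v) clause \<Rightarrow> bool" where
  "simple_clause C \<longleftrightarrow> (\<forall>L \<in> set C. simple_lit L)"

definition covering :: "('p, 'f, 'v) clause \<Rightarrow> bool" where
  "covering C \<longleftrightarrow> (\<forall>t \<in> cl_terms C. is_compound t \<longrightarrow> tvars t = cvars C)"

definition is_eq_atm :: "('p, 'f, 'v) atm \<Rightarrow> bool" where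
  "is_eq_atm A \<longleftrightarrow> (\<exists>s t. A = Eq s t)"

definition equality_free :: "('p, 'f, 'v) clause \<Rightarrow> bool" where
  "equality_free C \<longleftrightarrow> (\<forall>L \<in> set C. \<not> is_eq_atm (atom L))"

definition ground_clause :: "('p, 'f, 'v) clause \<Rightarrow> bool" where
  "ground_clause C \<longleftrightarrow> cvars C = {}"

definition loosely_guarded :: "('p, 'f, 'v) clause \<Rightarrow> bool" where
  "loosely_guarded C \<longleftrightarrow> equality_free C \<and> simple_clause C \<and> covering C \<and>
     (ground_clause C \<or>
      (\<exists>G. G \<subseteq> set C \<and> (\<forall>L \<in> G. \<not> positive L \<and> flat_lit L) \<and>
           (\<Union>L \<in> G. lvars L) = cvars C \<and>
           (\<forall>x \<in> cvars C. \<forall>y \<in> cvars C. \<exists>L \<in> G. x \<in> lvars L \<and> y \<in> lvars L)))"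

type_synonym ('f, 'v) subst = "'v \<Rightarrow> ('f, 'v) trm"

fun tsubst :: "('f, 'v) trm \<Rightarrow> ('f, 'v) subst \<Rightarrow> ('f, 'v) trm" where
  "tsubst (Var x) \<sigma> = \<sigma> x"
| "tsubst (Fun f ts) \<sigma> = Fun f (map (\<lambda>t. tsubst t \<sigma>) ts)"

fun asubst :: "('p, 'f, 'v) atm \<Rightarrow> ('f, 'v) subst \<Rightarrow> ('p, 'f, 'v) atm" where
  "asubst (Pred p ts) \<sigma> = Pred p (map (\<lambda>t. tsubst t \<sigma>) ts)"
| "asubst (Eq s t) \<sigma> = Eq (tsubst s \<sigma>) (tsubst t \<sigma>)"

definition simul_unifier :: "('f, 'v) subst \<Rightarrow> ('p, 'f, 'v) atm list \<Rightarrow> ('p, 'f, 'v) atm list \<Rightarrow> bool" where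
  "simul_unifier \<sigma> Bs As \<longleftrightarrow> length Bs = length As \<and>
     (\<forall>i < length As. asubst (Bs ! i) \<sigma> = asubst (As ! i) \<sigma>)"

definition simul_mgu :: "('f, 'v) subst \<Rightarrow> ('p, 'f, 'v) atm list \<Rightarrow> ('p, 'f, 'v) atm list \<Rightarrow> bool" where
  "simul_mgu \<sigma> Bs As \<longleftrightarrow> simul_unifier \<sigma> Bs As \<and>
     (\<forall>\<tau>. simul_unifier \<tau> Bs As \<longrightarrow> (\<exists>\<rho>. \<forall>x. \<tau> x = tsubst (\<sigma> x) \<rho>))"

definition top_var :: "('f, 'v) subst \<Rightarrow> ('p, 'f, 'v) atm list \<Rightarrow> 'v \<Rightarrow> bool" where
  "top_var \<sigma> As x \<longleftrightarrow> x \<in> (\<Union>A \<in> set As. avars A) \<and>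
     (\<forall>y \<in> (\<Union>A \<in> set As. avars A). dep (\<sigma> y) \<le> dep (\<sigma> x))"

end

theory Submission
  imports Defs
begin

text \<open>Since B_i lies in a simple, covering clause C_i, each compound argument of B_i contains
  every variable of C_i; under \<sigma>' it is therefore at least as deep as any other argument of
  B_i and strictly deeper than any variable of C_i. As A_i is flat, a compound argument of
  B_i can only be matched by a variable of A_i. So the variables of A_i facing compound
  arguments have maximal depth among those of A_i, while a variable facing a variable of
  B_i is strictly shallower than one facing a compound argument (which exists, C_i being
  non-ground). If a top variable faces a constant, all variables have depth 0, so no B_i has a
  compound argument, every C_i is ground, and every variable faces a constant.\<close>

lemma args_asubst: "args (asubst A \<sigma>) = map (\<lambda>t. tsubst t \<sigma>) (args A)"
  by (cases A) auto

lemma is_compound_iff: "is_compound t \<longleftrightarrow> (\<exists>f us. t = Fun f us \<and> us \<noteq> [])"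
  unfolding is_compound_def is_var_def is_const_def by (cases t) auto

lemma dep_subst_arg_less:
  assumes "u \<in> set us"
  shows "dep (tsubst u \<sigma>) < dep (tsubst (Fun f us) \<sigma>)"
proof -
  have "dep (tsubst u \<sigma>) \<le> (MAX t \<in> set us. dep (tsubst t \<sigma>))"
    using assms by (intro Max_ge) auto
  then show ?thesis using assms by (auto simp: le_imp_less_Suc)
qed

lemma dep_subst_var_le: "z \<in> tvars t \<Longrightarrow> dep (\<sigma> z) \<le> dep (tsubst t \<sigma>)"
proof (induction t)
  case (Fun f ts)
  then obtain u where "u \<in> set ts" "z \<in> tvars u" by auto
  with Fun.IH dep_subst_arg_less[of u ts \<sigma> f] show ?case by fastforce
qed simp

lemma dep_subst_var_less:
  assumes "z \<in> tvars (Fun f us)"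
  shows "dep (\<sigma> z) < dep (tsubst (Fun f us) \<sigma>)"
proof -
  obtain u where "u \<in> set us" "z \<in> tvars u" using assms by auto
  with dep_subst_var_le[of z u \<sigma>] dep_subst_arg_less[of u us \<sigma> f] show ?thesis by simp
qed

lemma dep_subst_flat_le:
  assumes flat: "\<forall>u \<in> set us. is_var u \<or> is_const u"
    and vars: "tvars (Fun f us) \<subseteq> tvars (Fun g vs)" and "vs \<noteq> []"
  shows "dep (tsubst (Fun f us) \<sigma>) \<le> dep (tsubst (Fun g vs) \<sigma>)"
proof (cases "us = []")
  case False
  have "dep (tsubst u \<sigma>) < dep (tsubst (Fun g vs) \<sigma>)" if "u \<in> set us" for u
  proof (cases "is_var u")
    case True
    then obtain z where "u = Var z" unfolding is_var_def by blast
    with that vars have "z \<in> tvars (Fun g vs)" by force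
    from dep_subst_var_less[OF this] show ?thesis using \<open>u = Var z\<close> by simp
  next
    case False
    with that flat show ?thesis using \<open>vs \<noteq> []\<close> unfolding is_const_def by auto
  qed
  with False show ?thesis by (simp add: Suc_le_eq)
qed simp


lemma compound_subterm_of_simple:
  assumes "is_var t \<or> is_const t \<or> (\<exists>f us. t = Fun f us \<and> (\<forall>u \<in> set us. is_var u \<or> is_const u))"
    and "s \<in> subterms t" and "is_compound s"
  shows "s = t"
  using assms unfolding is_compound_def is_var_def is_const_def by (cases t) auto

lemma var_in_avars: "k < length (args A) \<Longrightarrow> args A ! k = Var x \<Longrightarrow> x \<in> avars A"
  unfolding avars_def by (metis UN_I insertI1 nth_mem tvars.simps(1))

lemma top_var_dep_le:
  "top_var \<sigma> As x \<Longrightarrow> A \<in> set As \<Longrightarrow> y \<in> avars A \<Longrightarrow> dep (\<sigma> y) \<le> dep (\<sigma> x)"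
  unfolding top_var_def by blast

locale unified_pair =
  fixes A B :: "('p, 'f, 'v) atm" and C :: "('p, 'f, 'v) clause" and \<sigma> :: "('f, 'v) subst"
  assumes flat_A: "\<forall>t \<in> set (args A). is_var t \<or> is_const t"
    and B_in_C: "Lit True B \<in> set C"
    and simple: "simple_clause C"
    and covering: "covering C"
    and ground_or_compound: "ground_clause C \<or> (\<exists>t \<in> atm_terms B. is_compound t)"
    and unifies: "asubst B \<sigma> = asubst A \<sigma>"
begin

lemma length_args_eq: "length (args B) = length (args A)"
  using arg_cong[OF unifies, of "\<lambda>a. length (args a)"] by (simp add: args_asubst)

lemma arg_unifies: "k < length (args A) \<Longrightarrow> tsubst (args B ! k) \<sigma> = tsubst (args A ! k) \<sigma>"
  using arg_cong[OF unifies, of "\<lambda>a. args a ! k"] length_args_eq by (simp add: args_asubst)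

lemma B_arg_simple:
  "t \<in> set (args B) \<Longrightarrow>
     is_var t \<or> is_const t \<or> (\<exists>f us. t = Fun f us \<and> (\<forall>u \<in> set us. is_var u \<or> is_const u))"
  using simple B_in_C unfolding simple_clause_def simple_lit_def by fastforce

lemma B_arg_vars: "t \<in> set (args B) \<Longrightarrow> tvars t \<subseteq> cvars C"
  using B_in_C unfolding cvars_def lvars_def avars_def by fastforce

lemma B_compound_arg_vars: "t \<in> set (args B) \<Longrightarrow> is_compound t \<Longrightarrow> tvars t = cvars C"
proof -
  assume t: "t \<in> set (args B)" and "is_compound t"
  have "t \<in> subterms t" by (cases t) auto
  with t B_in_C have "t \<in> cl_terms C" unfolding cl_terms_def atm_terms_def by fastforce
  with covering \<open>is_compound t\<close> show ?thesis unfolding covering_def by blast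
qed

lemma nonground_compound_arg:
  assumes "cvars C \<noteq> {}"
  obtains k where "k < length (args A)" "is_compound (args B ! k)"
proof -
  from assms ground_or_compound obtain s t
    where "t \<in> set (args B)" "s \<in> subterms t" "is_compound s"
    unfolding ground_clause_def atm_terms_def by blast
  moreover from this have "s = t" using B_arg_simple compound_subterm_of_simple by blast
  ultimately show ?thesis using that length_args_eq by (metis in_set_conv_nth)
qed

lemma compound_matched_by_var:
  assumes "k < length (args A)" and "is_compound (args B ! k)"
  obtains x where "args A ! k = Var x" and "\<sigma> x = tsubst (args B ! k) \<sigma>"
proof -
  have "\<not> is_const (args A ! k)"
    using arg_unifies[OF assms(1)] assms(2) unfolding is_compound_iff is_const_def by auto
  with flat_A assms(1) obtain x where "args A ! k = Var x" unfolding is_var_def by (meson nth_mem)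
  with arg_unifies[OF assms(1)] that show ?thesis by simp
qed

lemma compound_arg_dep_max:
  assumes s: "s \<in> set (args B)" and t: "t \<in> set (args B)" and "is_compound t"
  shows "dep (tsubst s \<sigma>) \<le> dep (tsubst t \<sigma>)"
proof -
  from \<open>is_compound t\<close> obtain g vs where gvs: "t = Fun g vs" "vs \<noteq> []"
    unfolding is_compound_iff by blast
  have "tvars s \<subseteq> tvars t" using B_arg_vars[OF s] B_compound_arg_vars[OF t \<open>is_compound t\<close>] by simp
  consider (var) z where "s = Var z" | (const) c where "s = Fun c []"
    | (simple) f us where "s = Fun f us" "\<forall>u \<in> set us. is_var u \<or> is_const u"
    using B_arg_simple[OF s] unfolding is_var_def is_const_def by auto
  then show ?thesis
  proof cases
    case var
    with \<open>tvars s \<subseteq> tvars t\<close> gvs dep_subst_var_less[of z g vs \<sigma>] show ?thesis by simp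
  next
    case simple
    with \<open>tvars s \<subseteq> tvars t\<close> gvs show ?thesis by (metis dep_subst_flat_le)
  qed simp
qed

lemma flat_A_var_position:
  assumes "x \<in> avars A"
  obtains k where "k < length (args A)" and "args A ! k = Var x"
proof -
  from assms obtain t where t: "t \<in> set (args A)" "x \<in> tvars t" unfolding avars_def by blast
  with flat_A have "t = Var x" unfolding is_var_def is_const_def by auto
  with t(1) that show ?thesis by (metis in_set_conv_nth)
qed

lemma var_arg_dep_less:
  assumes "Var z \<in> set (args B)"
  obtains x where "x \<in> avars A" and "dep (\<sigma> z) < dep (\<sigma> x)"
proof -
  have z: "z \<in> cvars C" using B_arg_vars[OF assms] by simp
  then obtain k where k: "k < length (args A)" "is_compound (args B ! k)"
    using nonground_compound_arg by blast
  then obtain x where x: "args A ! k = Var x" "\<sigma> x = tsubst (args B ! k) \<sigma>"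
    by (rule compound_matched_by_var)
  have kB: "args B ! k \<in> set (args B)" using k(1) length_args_eq by simp
  from k(2) obtain f us where fus: "args B ! k = Fun f us" unfolding is_compound_iff by blast
  with z B_compound_arg_vars[OF kB k(2)] have "z \<in> tvars (Fun f us)" by simp
  then have "dep (\<sigma> z) < dep (\<sigma> x)" using dep_subst_var_less x(2) fus by metis
  with var_in_avars[OF k(1) x(1)] that show ?thesis by blast
qed

lemma top_var_matching:
  assumes A: "A \<in> set As" and top: "\<exists>x0 \<in> avars A. top_var \<sigma> As x0"
    and k: "k < length (args A)" and x: "args A ! k = Var x"
  shows "(top_var \<sigma> As x \<longrightarrow> is_const (args B ! k) \<or> is_compound (args B ! k)) \<and>
         (\<not> top_var \<sigma> As x \<longrightarrow> is_const (args B ! k) \<or> is_var (args B ! k))"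
proof -
  have kB: "args B ! k \<in> set (args B)" using k length_args_eq by simp
  have \<sigma>x: "\<sigma> x = tsubst (args B ! k) \<sigma>" using arg_unifies[OF k] x by simp
  have "\<not> top_var \<sigma> As x" if "is_var (args B ! k)"
  proof
    assume "top_var \<sigma> As x"
    from that obtain z where z: "args B ! k = Var z" unfolding is_var_def by blast
    with kB obtain y where "y \<in> avars A" "dep (\<sigma> z) < dep (\<sigma> y)"
      using var_arg_dep_less by metis
    moreover have "\<sigma> x = \<sigma> z" using \<sigma>x z by simp
    ultimately show False using top_var_dep_le[OF \<open>top_var \<sigma> As x\<close> A] by fastforce
  qed
  moreover have "top_var \<sigma> As x" if "is_compound (args B ! k)"
  proof -
    from top obtain x0 where x0: "x0 \<in> avars A" "top_var \<sigma> As x0" by blast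
    obtain k0 where k0: "k0 < length (args A)" "args A ! k0 = Var x0"
      using flat_A_var_position[OF x0(1)] by blast
    have "args B ! k0 \<in> set (args B)" using k0(1) length_args_eq by simp
    from compound_arg_dep_max[OF this kB that] have "dep (\<sigma> x0) \<le> dep (\<sigma> x)"
      using arg_unifies[OF k0(1)] k0(2) \<sigma>x by simp
    with x0(2) var_in_avars[OF k x] A show ?thesis unfolding top_var_def by fastforce
  qed
  ultimately show ?thesis unfolding is_compound_def by blast
qed

lemma depth_zero_imp_const:
  assumes dep0: "\<forall>y \<in> avars A. dep (\<sigma> y) = 0" and y: "y \<in> avars A"
  shows "is_const (\<sigma> y)"
proof -
  have no_compound: "\<not> is_compound (args B ! k)" if k: "k < length (args A)" for k
  proof
    assume "is_compound (args B ! k)"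
    moreover obtain x where "args A ! k = Var x" "\<sigma> x = tsubst (args B ! k) \<sigma>"
      using compound_matched_by_var[OF k \<open>is_compound (args B ! k)\<close>] by blast
    moreover have "dep (\<sigma> x) = 0" using dep0 var_in_avars[OF k \<open>args A ! k = Var x\<close>] by blast
    ultimately show False unfolding is_compound_iff by auto
  qed
  then have "cvars C = {}" using nonground_compound_arg by blast
  from y obtain k where k: "k < length (args A)" "args A ! k = Var y"
    by (rule flat_A_var_position)
  have kB: "args B ! k \<in> set (args B)" using k(1) length_args_eq by simp
  have "\<not> is_var (args B ! k)"
    using B_arg_vars[OF kB] \<open>cvars C = {}\<close> unfolding is_var_def by auto
  with B_arg_simple[OF kB] no_compound[OF k(1)] obtain c where "args B ! k = Fun c []"
    unfolding is_compound_def is_const_def by blast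
  with arg_unifies[OF k(1)] k(2) have "\<sigma> y = Fun c []" by simp
  then show ?thesis unfolding is_const_def by blast
qed

end

lemma top_var_dep_zero_imp_all_const:
  assumes pairs: "\<And>i. i < length As \<Longrightarrow> unified_pair (As ! i) (Bs ! i) (Cs ! i) \<sigma>"
    and x: "top_var \<sigma> As x" "dep (\<sigma> x) = 0" and y: "y \<in> (\<Union>A \<in> set As. avars A)"
  shows "top_var \<sigma> As y \<and> is_const (\<sigma> y)"
proof
  have dep0: "dep (\<sigma> z) = 0" if "z \<in> (\<Union>A \<in> set As. avars A)" for z
    using x that unfolding top_var_def by fastforce
  with y show "top_var \<sigma> As y" unfolding top_var_def by simp
  obtain j where j: "j < length As" "y \<in> avars (As ! j)"
    using y by (auto simp: in_set_conv_nth)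
  with unified_pair.depth_zero_imp_const[OF pairs[OF j(1)]] dep0 show "is_const (\<sigma> y)"
    using nth_mem by blast
qed

theorem mainTheorem10:
  fixes As :: "('p, 'f, 'v) atm list" and D :: "('p, 'f, 'v) atm list"
    and Bs :: "('p, 'f, 'v) atm list" and Ds :: "('p, 'f, 'v) clause list"
    and \<sigma> :: "('f, 'v) subst"
  defines "M \<equiv> map (Lit False) As @ map (Lit True) D"
  defines "Cs \<equiv> map (\<lambda>i. Lit True (Bs ! i) # Ds ! i) [0..<length As]"
  assumes lenB: "length Bs = length As" and lenD: "length Ds = length As"
    and flatM: "flat_clause M"
    and lg: "\<forall>i < length As. loosely_guarded (Cs ! i)"
    and disj: "\<forall>i < Suc (length As). \<forall>j < Suc (length As). i \<noteq> j \<longrightarrow>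
                 cvars ((M # Cs) ! i) \<inter> cvars ((M # Cs) ! j) = {}"
    and gc: "\<forall>i < length As. ground_clause (Cs ! i) \<or>
                 (\<exists>t \<in> atm_terms (Bs ! i). is_compound t)"
    and mgu: "simul_mgu \<sigma> Bs As"
  shows "(\<forall>i < length As. (\<exists>x \<in> avars (As ! i). top_var \<sigma> As x) \<longrightarrow>
            (\<forall>k < length (args (As ! i)). \<forall>x.
               args (As ! i) ! k = Var x \<longrightarrow>
               (top_var \<sigma> As x \<longrightarrow> is_const (args (Bs ! i) ! k) \<or> is_compound (args (Bs ! i) ! k)) \<and>
               (\<not> top_var \<sigma> As x \<longrightarrow> is_const (args (Bs ! i) ! k) \<or> is_var (args (Bs ! i) ! k))))
       \<and> ((\<exists>i < length As. \<exists>k < length (args (As ! i)). \<exists>x.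
              args (As ! i) ! k = Var x \<and> top_var \<sigma> As x \<and> is_const (args (Bs ! i) ! k))
          \<longrightarrow> (\<forall>y \<in> (\<Union>A \<in> set As. avars A). top_var \<sigma> As y \<and> is_const (\<sigma> y)))"
proof -
  have pair: "unified_pair (As ! i) (Bs ! i) (Cs ! i) \<sigma>" if i: "i < length As" for i
  proof
    have "Lit False (As ! i) \<in> set M" using i unfolding M_def by simp
    with flatM show "\<forall>t \<in> set (args (As ! i)). is_var t \<or> is_const t"
      unfolding flat_clause_def flat_lit_def by fastforce
    show "Lit True (Bs ! i) \<in> set (Cs ! i)" using i unfolding Cs_def by simp
    show "simple_clause (Cs ! i)" "covering (Cs ! i)"
      using lg i unfolding loosely_guarded_def by auto
    show "ground_clause (Cs ! i) \<or> (\<exists>t \<in> atm_terms (Bs ! i). is_compound t)" using gc i by blast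
    show "asubst (Bs ! i) \<sigma> = asubst (As ! i) \<sigma>"
      using mgu i unfolding simul_mgu_def simul_unifier_def by blast
  qed
  show ?thesis (is "?matching \<and> (?top_const \<longrightarrow> ?all_top_const)")
  proof (intro conjI impI)
    show ?matching using unified_pair.top_var_matching[OF pair] by (metis nth_mem)
  next
    assume ?top_const
    then obtain i k x where i: "i < length As" and k: "k < length (args (As ! i))"
      and x: "args (As ! i) ! k = Var x" "top_var \<sigma> As x" and c: "is_const (args (Bs ! i) ! k)"
      by blast
    have "\<sigma> x = tsubst (args (Bs ! i) ! k) \<sigma>"
      using unified_pair.arg_unifies[OF pair[OF i] k] x(1) by simp
    with c have "dep (\<sigma> x) = 0" unfolding is_const_def by auto
    then show ?all_top_const using top_var_dep_zero_imp_all_const[OF pair x(2)] by blast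
  qed
qed

end
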